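(* Let $\Omega$ be a topological space, $X$ a locally convex topological vector space over $\mathbb{C}$, $v \in F(\Omega, \mathbb{R}_+)$ and $f \in F(\Omega, X)$ such that $vf$ (respectively $f$) is continuous on $\mathrm{supp}\, v$. Let $A \subset C(\Omega, [0, 1])$, or let $A$ be a self-adjoint subalgebra of $C(\Omega, \mathbb{C})$ such that every $\varphi\in A$ is bounded on $\mathrm{supp}\,v$. If $A$ separates disjoint Lebesgue sets of $vf$ (respectively $f$) in $\mathrm{supp}\, v$, then $A$ $\beta$-separates disjoint Lebesgue sets of $vf$ (respectively $f$) in $\mathrm{supp}\, v$.
   Context: $vf(x)=v(x)f(x)$; $\mathrm{supp}\,v$ is the closure of $\{v\neq0\}$; $X^*$ is the space of continuous linear functionals $X\to\mathbb{C}$. For $h\in F(\Omega,X)$, $S\subset\Omega$, $e^*\in X^*$, $a<b$: $L_a=\{x\in S:\Re e^*(h(x))\le a\}$, $L^b=\{x\in S:\Re e^*(h(x))\ge b\}$. "$A$ separates disjoint Lebesgue sets of $h$ in $S$" means: for all $e^*\in X^*$ and $a<b$ there is $\varphi\in A$ with $\overline{\varphi(L_a)}\cap\overline{\varphi(L^b)}=\emptyset$ (with $\varphi(\emptyset)=\emptyset$). A zero-set is $h^{-1}(0)$ with $h\in C(\Omega,\mathbb{R})$; a $z$-filter is a nonempty family $\mathcal{F}$ of zero-sets with $\emptyset\notin\mathcal{F}$, closed under finite intersections and under passing to larger zero-sets. $\mathcal{F}$ is $(A,v)$-antisymmetric if every $F\in\mathcal{F}$ meets $\mathrm{supp}\,v$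 and, for each $\phi\in A$ with $\bigcap_{F\in\mathcal{F}}\overline{\phi(F\cap\mathrm{supp}\,v)}\subset[0,1]$ (closures in $\mathbb{C}\cup\{\infty\}$), this intersection is a single point. "$A$ $\beta$-separates disjoint Lebesgue sets of $h$ in $\mathrm{supp}\,v$" means: for any $(A,v)$-antisymmetric $z$-filter $\mathcal{F}$, any $e^*\in X^*$ and $a<b$, there is $F\in\mathcal{F}$ with $F\cap L_a=\emptyset$ or $F\cap L^b=\emptyset$, the Lebesgue sets being taken in $S=\mathrm{supp}\,v$. *)

theory Defs
  imports "HOL-Analysis.Analysis"
begin

text \<open>The library has no
class of complex vector spaces, so a complex vector space is modelled as a real
vector space together with a complex structure J (multiplication by i);
complex scalar multiplication is then (a + i b) x = a x + b J x.\<close>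

definition cscale :: "('x::real_vector \<Rightarrow> 'x) \<Rightarrow> complex \<Rightarrow> 'x \<Rightarrow> 'x" where
  "cscale J c x = Re c *\<^sub>R x + Im c *\<^sub>R J x"

definition complex_lctvs :: "('x::{real_vector,topological_space} \<Rightarrow> 'x) \<Rightarrow> bool" where
  "complex_lctvs J \<longleftrightarrow>
     linear J \<and> (\<forall>x. J (J x) = - x) \<and>
     continuous_on UNIV (\<lambda>p::'x \<times> 'x. fst p + snd p) \<and>
     continuous_on UNIV (\<lambda>p::real \<times> 'x. fst p *\<^sub>R snd p) \<and>
     continuous_on UNIV J \<and>
     (\<forall>U. open U \<and> (0::'x) \<in> U \<longrightarrow> (\<exists>V. open V \<and> convex V \<and> 0 \<in> V \<and> V \<subseteq> U))"

definition cdual :: "('x::{real_vector,topological_space} \<Rightarrow> 'x) \<Rightarrow> ('x \<Rightarrow> complex) set" where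
  "cdual J = {e. (\<forall>x y. e (x + y) = e x + e y) \<and> (\<forall>c x. e (cscale J c x) = c * e x)
                 \<and> continuous_on UNIV e}"

definition supp :: "('a::topological_space \<Rightarrow> real) \<Rightarrow> 'a set" where
  "supp v = closure {x. v x \<noteq> 0}"

definition Lsub :: "('a \<Rightarrow> 'x) \<Rightarrow> 'a set \<Rightarrow> ('x \<Rightarrow> complex) \<Rightarrow> real \<Rightarrow> 'a set" where
  "Lsub h S e a = {x \<in> S. Re (e (h x)) \<le> a}"

definition Lsup :: "('a \<Rightarrow> 'x) \<Rightarrow> 'a set \<Rightarrow> ('x \<Rightarrow> complex) \<Rightarrow> real \<Rightarrow> 'a set" where
  "Lsup h S e b = {x \<in> S. Re (e (h x)) \<ge> b}"

definition separates_lebesgue ::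
  "('x::{real_vector,topological_space} \<Rightarrow> 'x) \<Rightarrow> ('a \<Rightarrow> complex) set \<Rightarrow> ('a \<Rightarrow> 'x) \<Rightarrow> 'a set \<Rightarrow> bool" where
  "separates_lebesgue J A h S \<longleftrightarrow>
     (\<forall>e\<in>cdual J. \<forall>a b. a < b \<longrightarrow>
        (\<exists>\<phi>\<in>A. closure (\<phi> ` Lsub h S e a) \<inter> closure (\<phi> ` Lsup h S e b) = {}))"

definition zero_set :: "'a::topological_space set \<Rightarrow> bool" where
  "zero_set Z \<longleftrightarrow> (\<exists>h::'a \<Rightarrow> real. continuous_on UNIV h \<and> Z = h -` {0})"

definition z_filter :: "'a::topological_space set set \<Rightarrow> bool" where
  "z_filter \<F> \<longleftrightarrow> \<F> \<noteq> {} \<and> (\<forall>F\<in>\<F>. zero_set F) \<and> {} \<notin> \<F> \<and>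
     (\<forall>F G. F \<in> \<F> \<longrightarrow> G \<in> \<F> \<longrightarrow> F \<inter> G \<in> \<F>) \<and>
     (\<forall>F G. F \<in> \<F> \<longrightarrow> zero_set G \<longrightarrow> F \<subseteq> G \<longrightarrow> G \<in> \<F>)"

text \<open>C \<union> {\<infinity>} is modelled as complex option (None = \<infinity>); the closure of E \<subseteq> C in the
Riemann sphere is the closure in C plus \<infinity> exactly when E is unbounded.\<close>
definition ext_closure :: "complex set \<Rightarrow> complex option set" where
  "ext_closure E = Some ` closure E \<union> (if bounded E then {} else {None})"

definition antisymmetric ::
  "('a::topological_space \<Rightarrow> complex) set \<Rightarrow> ('a \<Rightarrow> real) \<Rightarrow> 'a set set \<Rightarrow> bool" where
  "antisymmetric A v \<F> \<longleftrightarrow>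
     (\<forall>F\<in>\<F>. F \<inter> supp v \<noteq> {}) \<and>
     (\<forall>\<phi>\<in>A. (\<Inter>F\<in>\<F>. ext_closure (\<phi> ` (F \<inter> supp v))) \<subseteq> Some ` (complex_of_real ` {0..1})
        \<longrightarrow> (\<exists>z. (\<Inter>F\<in>\<F>. ext_closure (\<phi> ` (F \<inter> supp v))) = {z}))"

definition beta_separates_lebesgue ::
  "('x::{real_vector,topological_space} \<Rightarrow> 'x) \<Rightarrow> ('a::topological_space \<Rightarrow> complex) set
    \<Rightarrow> ('a \<Rightarrow> real) \<Rightarrow> ('a \<Rightarrow> 'x) \<Rightarrow> bool" where
  "beta_separates_lebesgue J A v h \<longleftrightarrow>
     (\<forall>\<F>. z_filter \<F> \<and> antisymmetric A v \<F> \<longrightarrow>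
        (\<forall>e\<in>cdual J. \<forall>a b. a < b \<longrightarrow>
           (\<exists>F\<in>\<F>. F \<inter> Lsub h (supp v) e a = {} \<or> F \<inter> Lsup h (supp v) e b = {})))"

text \<open>Self-adjoint subalgebra of C(\<Omega>, C) (not required to contain constants).\<close>
definition selfadjoint_subalgebra :: "('a::topological_space \<Rightarrow> complex) set \<Rightarrow> bool" where
  "selfadjoint_subalgebra A \<longleftrightarrow>
     (\<forall>\<phi>\<in>A. continuous_on UNIV \<phi>) \<and> (\<lambda>_. 0) \<in> A \<and>
     (\<forall>\<phi>\<in>A. \<forall>\<psi>\<in>A. (\<lambda>x. \<phi> x + \<psi> x) \<in> A \<and> (\<lambda>x. \<phi> x * \<psi> x) \<in> A) \<and>
     (\<forall>c. \<forall>\<phi>\<in>A. (\<lambda>x. c * \<phi> x) \<in> A) \<and>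
     (\<forall>\<phi>\<in>A. (\<lambda>x. cnj (\<phi> x)) \<in> A)"

end

theory Submission
  imports Defs
begin

text \<open>Suppose some z-filter \<F> as in the definition meets both Lebesgue sets L_a and L^b in
each of its members, and let \<phi> \<in> A separate them.  Since \<phi> is bounded on supp v, compactness
gives cluster points w of \<phi> along \<F> on L_a and w' on L^b, and w \<noteq> w' because the closures of
\<phi>(L_a) and \<phi>(L^b) are disjoint.  Some \<psi> = g \<circ> \<phi> \<in> A with values in [0,1] on supp v still
separates them: \<psi> = \<phi> when A consists of [0,1]-valued functions, and otherwise
g(z) = c |z|^2 |z - u|^2, a polynomial in z and conj z without constant term.  Then g w and g w'
are two distinct points of the intersection that antisymmetry forces to be a singleton.\<close>

lemma compact_complex_unit_interval: "compact (complex_of_real ` {0..1})"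
  by (intro compact_continuous_image) (auto intro!: continuous_intros)

lemma ext_closure_bounded: "bounded E \<Longrightarrow> ext_closure E = Some ` closure E"
  by (simp add: ext_closure_def)

lemma z_filter_nonempty: "z_filter \<F> \<Longrightarrow> \<F> \<noteq> {}"
  unfolding z_filter_def by (elim conjE)

lemma z_filter_Int: "z_filter \<F> \<Longrightarrow> F \<in> \<F> \<Longrightarrow> G \<in> \<F> \<Longrightarrow> F \<inter> G \<in> \<F>"
  unfolding z_filter_def by (elim conjE) blast

lemma closure_image_comp_mono:
  fixes g :: "'b::topological_space \<Rightarrow> 'c::topological_space"
  assumes "continuous_on UNIV g" and "w \<in> closure (\<phi> ` X)" and "X \<subseteq> Y"
  shows "g w \<in> closure ((\<lambda>x. g (\<phi> x)) ` Y)"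
proof -
  have "g w \<in> closure (g ` \<phi> ` X)"
    using continuous_image_closure_subset[OF assms(1)] assms(2) by blast
  also have "\<dots> \<subseteq> closure ((\<lambda>x. g (\<phi> x)) ` Y)"
    using assms(3) by (intro closure_mono) auto
  finally show ?thesis .
qed

lemma common_closure_point_of_bounded_image:
  fixes \<phi> :: "'a \<Rightarrow> 'b::heine_borel"
  assumes "bounded (\<phi> ` L)" and "\<F> \<noteq> {}"
    and Int_mem: "\<And>F G. F \<in> \<F> \<Longrightarrow> G \<in> \<F> \<Longrightarrow> F \<inter> G \<in> \<F>"
    and meets: "\<And>F. F \<in> \<F> \<Longrightarrow> F \<inter> L \<noteq> {}"
  shows "\<exists>w. \<forall>F\<in>\<F>. w \<in> closure (\<phi> ` (F \<inter> L))"
proof -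
  have "closure (\<phi> ` L) \<inter> (\<Inter>F\<in>\<F>. closure (\<phi> ` (F \<inter> L))) \<noteq> {}"
  proof (rule compact_imp_fip_image)
    show "compact (closure (\<phi> ` L))"
      using assms(1) by simp
  next
    fix \<G> assume "finite \<G>" and "\<G> \<subseteq> \<F>"
    then obtain F0 where "F0 \<in> \<F>" and "F0 \<subseteq> \<Inter>\<G>"
    proof (induction \<G> arbitrary: thesis rule: finite_induct)
      case empty
      then show ?case using \<open>\<F> \<noteq> {}\<close> by blast
    next
      case (insert G \<G>)
      then obtain F0 where "F0 \<in> \<F>" and "F0 \<subseteq> \<Inter>\<G>" by blast
      then show ?case using insert.prems Int_mem[of G F0] by blast
    qed
    then obtain x where "x \<in> F0 \<inter> L" using meets by blast
    then have "\<phi> x \<in> closure (\<phi> ` L) \<inter> (\<Inter>G\<in>\<G>. closure (\<phi> ` (G \<inter> L)))"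
      using \<open>F0 \<subseteq> \<Inter>\<G>\<close> closure_subset by fastforce
    then show "closure (\<phi> ` L) \<inter> (\<Inter>G\<in>\<G>. closure (\<phi> ` (G \<inter> L))) \<noteq> {}" by blast
  qed simp
  then show ?thesis by blast
qed

lemma antisymmetric_common_closure_point_unique:
  assumes "antisymmetric A v \<F>" and "\<F> \<noteq> {}" and "\<psi> \<in> A"
    and unit: "\<And>x. x \<in> supp v \<Longrightarrow> \<psi> x \<in> complex_of_real ` {0..1}"
    and p: "\<forall>F\<in>\<F>. p \<in> closure (\<psi> ` (F \<inter> supp v))"
    and q: "\<forall>F\<in>\<F>. q \<in> closure (\<psi> ` (F \<inter> supp v))"
  shows "p = q"
proof -
  let ?I = "\<Inter>F\<in>\<F>. ext_closure (\<psi> ` (F \<inter> supp v))"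
  have image_unit: "\<psi> ` (F \<inter> supp v) \<subseteq> complex_of_real ` {0..1}" for F
    using unit by blast
  have closure_unit: "closure (\<psi> ` (F \<inter> supp v)) \<subseteq> complex_of_real ` {0..1}" for F
    using image_unit compact_imp_closed[OF compact_complex_unit_interval] by (rule closure_minimal)
  have ext_eq: "ext_closure (\<psi> ` (F \<inter> supp v)) = Some ` closure (\<psi> ` (F \<inter> supp v))" for F
    using compact_imp_bounded[OF compact_complex_unit_interval] image_unit
    by (intro ext_closure_bounded) (rule bounded_subset)
  obtain F0 where "F0 \<in> \<F>"
    using \<open>\<F> \<noteq> {}\<close> by blast
  then have "?I \<subseteq> Some ` closure (\<psi> ` (F0 \<inter> supp v))"
    unfolding ext_eq by blast
  also have "\<dots> \<subseteq> Some ` complex_of_real ` {0..1}"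
    using closure_unit by (rule image_mono)
  finally obtain z where "?I = {z}"
    using assms(1,3) unfolding antisymmetric_def by blast
  moreover have "Some p \<in> ?I" and "Some q \<in> ?I"
    using p q unfolding ext_eq by auto
  ultimately show ?thesis by auto
qed

lemma selfadjoint_subalgebra_norm_poly:
  assumes A: "selfadjoint_subalgebra A" and "\<phi> \<in> A"
  shows "(\<lambda>x. complex_of_real (c * (cmod (\<phi> x))\<^sup>2 * (cmod (\<phi> x - u))\<^sup>2)) \<in> A"
proof -
  have add: "(\<lambda>x. f x + h x) \<in> A" and mult: "(\<lambda>x. f x * h x) \<in> A"
    and scale: "(\<lambda>x. k * f x) \<in> A" and cnj: "(\<lambda>x. cnj (f x)) \<in> A"
    if "f \<in> A" "h \<in> A" for f h k
    using A that unfolding selfadjoint_subalgebra_def by auto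
  define q where "q x = \<phi> x * cnj (\<phi> x)" for x
  have "q \<in> A"
    unfolding q_def[abs_def] using \<open>\<phi> \<in> A\<close> by (intro mult cnj)
  then have "(\<lambda>x. of_real c * ((q x * q x + - cnj u * (q x * \<phi> x))
                 + (- u * (q x * cnj (\<phi> x)) + u * cnj u * q x))) \<in> A"
    using \<open>\<phi> \<in> A\<close> by (intro scale add mult cnj) auto
  moreover have "complex_of_real (c * (cmod (\<phi> x))\<^sup>2 * (cmod (\<phi> x - u))\<^sup>2)
             = of_real c * ((q x * q x + - cnj u * (q x * \<phi> x))
                   + (- u * (q x * cnj (\<phi> x)) + u * cnj u * q x))" for x
    unfolding of_real_mult complex_norm_square q_def by (simp add: algebra_simps)
  ultimately show ?thesis by (simp only:)
qed

lemma selfadjoint_subalgebra_unit_interval_separator: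
  assumes "selfadjoint_subalgebra A" and "\<phi> \<in> A" and "bounded (\<phi> ` S)" and "w \<noteq> w'"
  shows "\<exists>g. continuous_on UNIV g \<and> (\<lambda>x. g (\<phi> x)) \<in> A
           \<and> (\<forall>x\<in>S. g (\<phi> x) \<in> complex_of_real ` {0..1}) \<and> g w \<noteq> g w'"
proof -
  obtain M where M: "\<And>x. x \<in> S \<Longrightarrow> cmod (\<phi> x) \<le> M" and "0 \<le> M"
  proof -
    obtain M0 where "\<forall>y\<in>\<phi> ` S. norm y \<le> M0"
      using assms(3) unfolding bounded_iff by blast
    then show ?thesis using that[of "max M0 0"] by force
  qed
  \<comment> \<open>u is whichever of w, w' makes the other one neither 0 nor u, so that g separates them\<close>
  define u where "u = (if w = 0 then w else w')"
  define c where "c = 1 / (1 + M\<^sup>2 * (M + cmod u)\<^sup>2)"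
  define g where "g z = complex_of_real (c * (cmod z)\<^sup>2 * (cmod (z - u))\<^sup>2)" for z
  have "c > 0" unfolding c_def by (simp add: add_pos_nonneg)
  have "continuous_on UNIV g"
    unfolding g_def[abs_def] by (intro continuous_intros)
  moreover have "(\<lambda>x. g (\<phi> x)) \<in> A"
    unfolding g_def using assms(1,2) by (rule selfadjoint_subalgebra_norm_poly)
  moreover have "g (\<phi> x) \<in> complex_of_real ` {0..1}" if "x \<in> S" for x
  proof -
    have "(cmod (\<phi> x))\<^sup>2 * (cmod (\<phi> x - u))\<^sup>2 \<le> M\<^sup>2 * (M + cmod u)\<^sup>2"
      using M[OF that] norm_triangle_ineq4[of "\<phi> x" u]
      by (intro mult_mono power_mono) auto
    then have "c * ((cmod (\<phi> x))\<^sup>2 * (cmod (\<phi> x - u))\<^sup>2) \<le> 1"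
      unfolding c_def by (simp add: divide_le_eq_1 add_pos_nonneg)
    then show ?thesis
      unfolding g_def using \<open>c > 0\<close> by (intro imageI) (simp add: mult.assoc)
  qed
  moreover have "g w \<noteq> g w'"
    using \<open>w \<noteq> w'\<close> \<open>c > 0\<close> unfolding g_def u_def by auto
  ultimately show ?thesis by blast
qed

lemma bounded_image_if_unit_interval_valued_or_bounded:
  assumes A: "A \<subseteq> {\<phi>. continuous_on UNIV \<phi> \<and> range \<phi> \<subseteq> complex_of_real ` {0..1}}
         \<or> (selfadjoint_subalgebra A \<and> (\<forall>\<phi>\<in>A. bounded (\<phi> ` S)))"
    and "\<phi> \<in> A"
  shows "bounded (\<phi> ` S)"
  using A
proof
  assume "A \<subseteq> {\<phi>. continuous_on UNIV \<phi> \<and> range \<phi> \<subseteq> complex_of_real ` {0..1}}"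
  then have "\<phi> ` S \<subseteq> complex_of_real ` {0..1}"
    using \<open>\<phi> \<in> A\<close> by blast
  with compact_imp_bounded[OF compact_complex_unit_interval] show ?thesis
    by (rule bounded_subset)
qed (use \<open>\<phi> \<in> A\<close> in blast)

lemma unit_interval_separator:
  assumes A: "A \<subseteq> {\<phi>. continuous_on UNIV \<phi> \<and> range \<phi> \<subseteq> complex_of_real ` {0..1}}
         \<or> (selfadjoint_subalgebra A \<and> (\<forall>\<phi>\<in>A. bounded (\<phi> ` S)))"
    and "\<phi> \<in> A" and "w \<noteq> w'"
  shows "\<exists>g. continuous_on UNIV g \<and> (\<lambda>x. g (\<phi> x)) \<in> A
           \<and> (\<forall>x\<in>S. g (\<phi> x) \<in> complex_of_real ` {0..1}) \<and> g w \<noteq> g w'"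
  using A
proof
  assume "A \<subseteq> {\<phi>. continuous_on UNIV \<phi> \<and> range \<phi> \<subseteq> complex_of_real ` {0..1}}"
  then have "range \<phi> \<subseteq> complex_of_real ` {0..1}"
    using \<open>\<phi> \<in> A\<close> by blast
  then show ?thesis
    using assms(2,3) by (intro exI[of _ id]) auto
next
  assume "selfadjoint_subalgebra A \<and> (\<forall>\<phi>\<in>A. bounded (\<phi> ` S))"
  then show ?thesis
    using assms(2,3) selfadjoint_subalgebra_unit_interval_separator by blast
qed

lemma separates_lebesgue_imp_beta_separates_lebesgue:
  assumes A: "A \<subseteq> {\<phi>. continuous_on UNIV \<phi> \<and> range \<phi> \<subseteq> complex_of_real ` {0..1}}
         \<or> (selfadjoint_subalgebra A \<and> (\<forall>\<phi>\<in>A. bounded (\<phi> ` supp v)))"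
    and sep: "separates_lebesgue J A h (supp v)"
  shows "beta_separates_lebesgue J A v h"
  unfolding beta_separates_lebesgue_def
proof (intro allI impI ballI)
  fix \<F> e a b
  assume \<F>: "z_filter \<F> \<and> antisymmetric A v \<F>" and "e \<in> cdual J" and "(a::real) < b"
  define La where "La = Lsub h (supp v) e a"
  define Lb where "Lb = Lsup h (supp v) e b"
  have "La \<subseteq> supp v" and "Lb \<subseteq> supp v"
    unfolding La_def Lb_def Lsub_def Lsup_def by auto
  obtain \<phi> where "\<phi> \<in> A" and disjoint: "closure (\<phi> ` La) \<inter> closure (\<phi> ` Lb) = {}"
    using sep \<open>e \<in> cdual J\<close> \<open>a < b\<close> unfolding separates_lebesgue_def La_def Lb_def by blast
  have "\<F> \<noteq> {}" and Int_mem: "\<And>F G. F \<in> \<F> \<Longrightarrow> G \<in> \<F> \<Longrightarrow> F \<inter> G \<in> \<F>"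
    using \<F> z_filter_nonempty z_filter_Int by blast+
  have bounded_supp: "bounded (\<phi> ` supp v)"
    using A \<open>\<phi> \<in> A\<close> by (rule bounded_image_if_unit_interval_valued_or_bounded)
  show "\<exists>F\<in>\<F>. F \<inter> La = {} \<or> F \<inter> Lb = {}"
  proof (rule ccontr)
    assume "\<not> ?thesis"
    then have meets: "F \<inter> La \<noteq> {}" "F \<inter> Lb \<noteq> {}" if "F \<in> \<F>" for F
      using that by auto
    obtain w where w: "\<forall>F\<in>\<F>. w \<in> closure (\<phi> ` (F \<inter> La))"
      using common_closure_point_of_bounded_image[OF _ \<open>\<F> \<noteq> {}\<close> Int_mem meets(1)]
        bounded_subset[OF bounded_supp image_mono[OF \<open>La \<subseteq> supp v\<close>]] by blast
    obtain w' where w': "\<forall>F\<in>\<F>. w' \<in> closure (\<phi> ` (F \<inter> Lb))"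
      using common_closure_point_of_bounded_image[OF _ \<open>\<F> \<noteq> {}\<close> Int_mem meets(2)]
        bounded_subset[OF bounded_supp image_mono[OF \<open>Lb \<subseteq> supp v\<close>]] by blast
    obtain F0 where "F0 \<in> \<F>"
      using \<open>\<F> \<noteq> {}\<close> by blast
    then have "w \<in> closure (\<phi> ` La)" and "w' \<in> closure (\<phi> ` Lb)"
      using w w' by (auto elim!: subsetD[OF closure_mono[OF image_mono], rotated])
    then have "w \<noteq> w'"
      using disjoint by blast
    then obtain g where g: "continuous_on UNIV g" "(\<lambda>x. g (\<phi> x)) \<in> A"
      "\<forall>x\<in>supp v. g (\<phi> x) \<in> complex_of_real ` {0..1}" and "g w \<noteq> g w'"
      using unit_interval_separator[OF A \<open>\<phi> \<in> A\<close>] by blast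
    have g_closure: "g z \<in> closure ((\<lambda>x. g (\<phi> x)) ` (F \<inter> supp v))"
      if "z \<in> closure (\<phi> ` (F \<inter> L))" and "L \<subseteq> supp v" for z F L
      by (rule closure_image_comp_mono[OF g(1) that(1)]) (use that(2) in blast)
    have "g w = g w'"
    proof (rule antisymmetric_common_closure_point_unique[OF _ \<open>\<F> \<noteq> {}\<close> g(2)])
      show "antisymmetric A v \<F>"
        using \<F> by blast
      show "\<forall>F\<in>\<F>. g w \<in> closure ((\<lambda>x. g (\<phi> x)) ` (F \<inter> supp v))"
        using w g_closure \<open>La \<subseteq> supp v\<close> by blast
      show "\<forall>F\<in>\<F>. g w' \<in> closure ((\<lambda>x. g (\<phi> x)) ` (F \<inter> supp v))"
        using w' g_closure \<open>Lb \<subseteq> supp v\<close> by blast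
    qed (use g(3) in blast)
    with \<open>g w \<noteq> g w'\<close> show False ..
  qed
qed

theorem lemma3p7:
  fixes J :: "'x::{real_vector,topological_space} \<Rightarrow> 'x"
    and v :: "'a::topological_space \<Rightarrow> real"
    and f :: "'a \<Rightarrow> 'x"
    and A :: "('a \<Rightarrow> complex) set"
  assumes "complex_lctvs J"
    and "\<forall>x. v x \<ge> 0"
    and "A \<subseteq> {\<phi>. continuous_on UNIV \<phi> \<and> range \<phi> \<subseteq> complex_of_real ` {0..1}}
         \<or> (selfadjoint_subalgebra A \<and> (\<forall>\<phi>\<in>A. bounded (\<phi> ` supp v)))"
  shows "(continuous_on (supp v) (\<lambda>x. v x *\<^sub>R f x)
            \<and> separates_lebesgue J A (\<lambda>x. v x *\<^sub>R f x) (supp v)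
          \<longrightarrow> beta_separates_lebesgue J A v (\<lambda>x. v x *\<^sub>R f x))
       \<and> (continuous_on (supp v) f \<and> separates_lebesgue J A f (supp v)
          \<longrightarrow> beta_separates_lebesgue J A v f)"
  using separates_lebesgue_imp_beta_separates_lebesgue[OF assms(3)] by blast

end
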